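(* Let $G$ be a minimal prime graph complement, and suppose $G$ has a vertex of degree $2$. Then $G$ contains an induced $5$-cycle $S$, and there are three vertices of $S$, exactly two of which are adjacent to each other, such that $G$ is obtained from $S$ by duplicating each of these three vertices some finite (possibly zero) number of times, where duplicating a vertex $v$ means adding a new vertex $w$ adjacent to exactly the neighbors of $v$ (and not to $v$). Equivalently, $G$ is isomorphic to the graph with vertex set $\{A,B\}\cup P\cup Q\cup R$ (disjoint union) with $|P|,|Q|,|R|\ge 1$, in which $A$ is adjacent to every vertex of $P\cup R$, $B$ is adjacent to every vertex of $Q\cup R$, every vertex of $P$ is adjacent to every vertex of $Q$, and there are no other edges. In particular, $G$ is the complement of a reseminant graph.
   Context: All graphs are finite and simple. A graph $G$ is a minimal prime graph complement if $G$ has at least $2$ vertices and: (1) the complement $\overline{G}$ is connected; (2) $G$ is triangle-free; (3) $G$ is $3$-colorable (has a proper vertex coloring with $3$ colors); (4) $G$ is edge-maximal with respect to (2) and (3), i.e. for any two distinct nonadjacent vertices $u,v$ of $G$, the graph obtained by adding the edge $uv$ to $G$ either contains a triangle or is not $3$-colorable. (Its complement is called a minimal prime graph.) A minimal prime graph is reseminant if it is obtained from the $5$-cycle $C_5$ by repeated vertex duplication; in terms of complements, $G$ is the complement of a reseminant graph iff $G$ is obtained from $C_5$ by repeatedly choosing a vertex $v$ and adding a new vertex $w$ adjacent to exactly the neighbors of $v$. *)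

theory Defs
  imports Main
begin

definition simple_graph :: "'a set \<Rightarrow> ('a \<Rightarrow> 'a \<Rightarrow> bool) \<Rightarrow> bool" where
  "simple_graph V E \<longleftrightarrow> finite V \<and> (\<forall>x y. E x y \<longrightarrow> x \<in> V \<and> y \<in> V)
     \<and> (\<forall>x y. E x y \<longrightarrow> E y x) \<and> (\<forall>x. \<not> E x x)"

definition complement_rel :: "'a set \<Rightarrow> ('a \<Rightarrow> 'a \<Rightarrow> bool) \<Rightarrow> 'a \<Rightarrow> 'a \<Rightarrow> bool" where
  "complement_rel V E x y \<longleftrightarrow> x \<in> V \<and> y \<in> V \<and> x \<noteq> y \<and> \<not> E x y"

definition graph_connected :: "'a set \<Rightarrow> ('a \<Rightarrow> 'a \<Rightarrow> bool) \<Rightarrow> bool" where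
  "graph_connected V E \<longleftrightarrow> (\<forall>u\<in>V. \<forall>v\<in>V. E\<^sup>*\<^sup>* u v)"

definition triangle_free :: "('a \<Rightarrow> 'a \<Rightarrow> bool) \<Rightarrow> bool" where
  "triangle_free E \<longleftrightarrow> \<not> (\<exists>a b c. E a b \<and> E b c \<and> E a c)"

definition colorable :: "'a set \<Rightarrow> ('a \<Rightarrow> 'a \<Rightarrow> bool) \<Rightarrow> nat \<Rightarrow> bool" where
  "colorable V E k \<longleftrightarrow> (\<exists>c :: 'a \<Rightarrow> nat. (\<forall>v\<in>V. c v < k) \<and> (\<forall>u v. E u v \<longrightarrow> c u \<noteq> c v))"

definition add_edge :: "('a \<Rightarrow> 'a \<Rightarrow> bool) \<Rightarrow> 'a \<Rightarrow> 'a \<Rightarrow> 'a \<Rightarrow> 'a \<Rightarrow> bool" where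
  "add_edge E u v = (\<lambda>x y. E x y \<or> (x = u \<and> y = v) \<or> (x = v \<and> y = u))"

definition minimal_prime_graph_complement :: "'a set \<Rightarrow> ('a \<Rightarrow> 'a \<Rightarrow> bool) \<Rightarrow> bool" where
  "minimal_prime_graph_complement V E \<longleftrightarrow>
     simple_graph V E \<and> 2 \<le> card V \<and>
     graph_connected V (complement_rel V E) \<and>
     triangle_free E \<and> colorable V E 3 \<and>
     (\<forall>u\<in>V. \<forall>v\<in>V. u \<noteq> v \<and> \<not> E u v \<longrightarrow>
        \<not> (triangle_free (add_edge E u v) \<and> colorable V (add_edge E u v) 3))"

definition degree :: "'a set \<Rightarrow> ('a \<Rightarrow> 'a \<Rightarrow> bool) \<Rightarrow> 'a \<Rightarrow> nat" where
  "degree V E v = card {u \<in> V. E v u}"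

end

theory Submission
  imports Defs
begin

(* Let v have neighbours a and b. Maximality says: two nonadjacent vertices without a common
   neighbour get the same colour in every proper 3-colouring, for otherwise the edge between them
   could be added. Exhibiting suitable 3-colourings then shows that every vertex other than a, b
   is adjacent to a or b, and that every private neighbour of a is adjacent to every private
   neighbour of b. Both a and b have private neighbours: otherwise N(a) and N(b) are nested, hence
   equal (recolour the smaller one with the colour of the larger), and then {a, b} is a union of
   components of the complement not containing v. So G is determined by A = a, B = b and the sets
   P, Q, R of private neighbours of a, of b, and common neighbours. *)

definition proper_coloring :: "'a set \<Rightarrow> ('a \<Rightarrow> 'a \<Rightarrow> bool) \<Rightarrow> nat \<Rightarrow> ('a \<Rightarrow> nat) \<Rightarrow> bool" where
  "proper_coloring V E k c \<longleftrightarrow> (\<forall>v\<in>V. c v < k) \<and> (\<forall>u v. E u v \<longrightarrow> c u \<noteq> c v)"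

lemma colorable_iff_proper_coloring: "colorable V E k \<longleftrightarrow> (\<exists>c. proper_coloring V E k c)"
  unfolding colorable_def proper_coloring_def by blast

lemma degree_eq_2_imp_neighbours:
  assumes "simple_graph V E" and "degree V E v = 2"
  obtains a b where "a \<noteq> b" and "\<And>y. E v y \<longleftrightarrow> y = a \<or> y = b"
proof -
  obtain a b where ab: "{u \<in> V. E v u} = {a, b}" "a \<noteq> b"
    using assms(2) unfolding degree_def by (auto simp: card_2_iff)
  have "E v y \<longleftrightarrow> y \<in> {u \<in> V. E v u}" for y
    using assms(1) unfolding simple_graph_def by blast
  with ab that show thesis by blast
qed

locale min_prime_complement =
  fixes V :: "'a set" and E :: "'a \<Rightarrow> 'a \<Rightarrow> bool"
  assumes mpgc: "minimal_prime_graph_complement V E"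
begin

lemma simple: "simple_graph V E"
  using mpgc unfolding minimal_prime_graph_complement_def by blast

lemma edge_in_V: "E x y \<Longrightarrow> x \<in> V" "E x y \<Longrightarrow> y \<in> V"
  using simple unfolding simple_graph_def by blast+

lemma edge_sym: "E x y \<Longrightarrow> E y x"
  using simple unfolding simple_graph_def by blast

lemma no_loop: "\<not> E x x"
  using simple unfolding simple_graph_def by blast

lemma no_triangle: "E x y \<Longrightarrow> E y z \<Longrightarrow> \<not> E x z"
  using mpgc unfolding minimal_prime_graph_complement_def triangle_free_def by blast

lemma neighbours_nonadjacent: "E x y \<Longrightarrow> E x z \<Longrightarrow> \<not> E y z"
  using no_triangle edge_sym by blast

lemma complement_connected: "graph_connected V (complement_rel V E)"
  using mpgc unfolding minimal_prime_graph_complement_def by blast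

lemma proper_coloring_exists: "\<exists>c. proper_coloring V E 3 c"
  using mpgc unfolding minimal_prime_graph_complement_def colorable_iff_proper_coloring by blast

lemma same_color_if_no_common_neighbour:
  assumes "u \<in> V" "w \<in> V" "u \<noteq> w" "\<not> E u w" "\<nexists>z. E u z \<and> E w z"
    and c: "proper_coloring V E 3 c"
  shows "c u = c w"
proof (rule ccontr)
  assume "c u \<noteq> c w"
  with c have "colorable V (add_edge E u w) 3"
    unfolding colorable_def proper_coloring_def add_edge_def by (intro exI[of _ c]) auto
  moreover have "triangle_free (add_edge E u w)"
    unfolding triangle_free_def add_edge_def using assms(3,5) by (metis edge_sym no_triangle no_loop)
  ultimately show False
    using mpgc assms(1-4) unfolding minimal_prime_graph_complement_def by blast
qed

lemma neighbourhood_subset_imp_eq: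
  assumes "a \<in> V" "\<not> E a b" and sub: "\<And>z. E a z \<Longrightarrow> E b z"
  shows "E b z \<longleftrightarrow> E a z"
proof (rule ccontr)
  assume "\<not> (E b z \<longleftrightarrow> E a z)"
  with sub have bz: "E b z" "\<not> E a z" by blast+
  obtain c0 where c0: "proper_coloring V E 3 c0"
    using proper_coloring_exists by blast
  \<comment> \<open>since N(a) \<subseteq> N(b), a may take the colour of b, which differs from that of z\<close>
  define c where "c = c0(a := c0 b)"
  have c: "proper_coloring V E 3 c"
    using c0 edge_in_V[OF bz(1)] sub edge_sym no_loop
    unfolding proper_coloring_def c_def by simp
  have az: "a \<noteq> z"
    using assms(2) bz(1) edge_sym by blast
  have "c a = c z"
  proof (rule same_color_if_no_common_neighbour[OF assms(1) edge_in_V(2)[OF bz(1)] az bz(2) _ c])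
    show "\<nexists>y. E a y \<and> E z y" using bz(1) sub no_triangle by blast
  qed
  moreover have "c a \<noteq> c z"
    using c0 bz(1) az unfolding proper_coloring_def c_def by auto
  ultimately show False by blast
qed

end

locale degree_two_vertex = min_prime_complement +
  fixes v a b :: 'a
  assumes v_in_V: "v \<in> V" and a_ne_b: "a \<noteq> b"
    and neighbours_v: "\<And>y. E v y \<longleftrightarrow> y = a \<or> y = b"
begin

lemma swap: "degree_two_vertex V E v b a"
  using min_prime_complement_axioms v_in_V a_ne_b neighbours_v
  by (simp add: degree_two_vertex_def degree_two_vertex_axioms_def disj_commute)

lemma not_edge_ab: "\<not> E a b"
  using neighbours_nonadjacent[of v a b] neighbours_v by blast

lemma edge_av: "E a v" and edge_bv: "E b v"
  using neighbours_v edge_sym[of v] by blast+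

lemma same_color_as_v:
  assumes x: "x \<in> V" "x \<noteq> a" "x \<noteq> b" "\<not> E a x" "\<not> E b x"
    and c: "proper_coloring V E 3 c"
  shows "c x = c v"
proof (rule same_color_if_no_common_neighbour[OF x(1) v_in_V _ _ _ c])
  show "x \<noteq> v" using x(4) edge_av by blast
  show "\<not> E x v" using x(2,3) neighbours_v[of x] edge_sym[of x v] by blast
  show "\<nexists>z. E x z \<and> E v z" using x(4,5) neighbours_v edge_sym[of x a] edge_sym[of x b] by auto
qed

lemma vertex_adjacent_to_a_or_b:
  assumes "x \<in> V"
  shows "x = a \<or> x = b \<or> E a x \<or> E b x"
proof (rule ccontr)
  assume "\<not> ?thesis"
  then have x: "x \<noteq> a" "x \<noteq> b" "\<not> E a x" "\<not> E b x" by blast+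
  obtain c0 where c0: "proper_coloring V E 3 c0"
    using proper_coloring_exists by blast
  define far where "far y \<longleftrightarrow> y \<in> V \<and> y \<noteq> a \<and> y \<noteq> b \<and> \<not> E a y \<and> \<not> E b y" for y
  have far_independent: "\<not> E y z" if "far y" "far z" for y z
    using that same_color_as_v[OF _ _ _ _ _ c0] c0 unfolding far_def proper_coloring_def by metis
  define c :: "'a \<Rightarrow> nat" where "c y = (if y = a then 0 else if y = b then 1
      else if E a y \<and> \<not> E b y then 1 else if E b y then 2 else 0)" for y
  have c: "proper_coloring V E 3 c"
    unfolding proper_coloring_def
  proof (intro conjI allI impI ballI)
    fix y z assume e: "E y z"
    then show "c y \<noteq> c z"
      using edge_in_V[OF e] far_independent[of y z] neighbours_nonadjacent[of a y z]
        neighbours_nonadjacent[of b y z] not_edge_ab edge_sym[OF e] no_loop[of y] a_ne_b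
      unfolding c_def far_def by auto
  qed (simp add: c_def)
  have "c x \<noteq> c v"
    using x edge_av edge_bv no_loop[of a] no_loop[of b] unfolding c_def by auto
  with same_color_as_v[OF assms x c] show False by blast
qed

lemma private_neighbours_adjacent:
  assumes p: "E a p" "\<not> E b p" and q: "E b q" "\<not> E a q"
  shows "E p q"
proof (rule ccontr)
  assume npq: "\<not> E p q"
  define c :: "'a \<Rightarrow> nat" where "c y = (if y = a \<or> y = b then 0 else if E a y then 1 else 2)" for y
  have c: "proper_coloring V E 3 c"
    unfolding proper_coloring_def
  proof (intro conjI allI impI ballI)
    fix y z assume e: "E y z"
    have "y = a \<or> y = b \<or> E a y \<or> E b y" "z = a \<or> z = b \<or> E a z \<or> E b z"
      using vertex_adjacent_to_a_or_b edge_in_V[OF e] by blast+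
    then show "c y \<noteq> c z"
      using e neighbours_nonadjacent[of a y z] neighbours_nonadjacent[of b y z] not_edge_ab
        edge_sym[OF e] no_loop[of y] a_ne_b
      unfolding c_def by auto
  qed (simp add: c_def)
  have "\<nexists>z. E p z \<and> E q z"
  proof
    assume "\<exists>z. E p z \<and> E q z"
    then obtain z where z: "E p z" "E q z" by blast
    from vertex_adjacent_to_a_or_b[OF edge_in_V(2)[OF z(1)]] show False
      using z p q neighbours_nonadjacent[of a p z] neighbours_nonadjacent[of b q z] edge_sym by blast
  qed
  moreover have "p \<noteq> q" using p q by blast
  ultimately have "c p = c q"
    using same_color_if_no_common_neighbour[OF edge_in_V(2)[OF p(1)] edge_in_V(2)[OF q(1)] _ npq _ c]
    by blast
  moreover have "c p \<noteq> c q"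
    using p q not_edge_ab edge_sym[of b a] no_loop[of a] unfolding c_def by auto
  ultimately show False by blast
qed

lemma private_neighbour_exists: "\<exists>p. E a p \<and> \<not> E b p"
proof (rule ccontr)
  assume "\<not> ?thesis"
  then have "E a z \<Longrightarrow> E b z" for z by blast
  then have twins: "E a z \<longleftrightarrow> E b z" for z
    using neighbourhood_subset_imp_eq[OF edge_in_V(1)[OF edge_av] not_edge_ab] by blast
  have "(complement_rel V E)\<^sup>*\<^sup>* a v"
    using complement_connected v_in_V edge_in_V(1)[OF edge_av] unfolding graph_connected_def by blast
  \<comment> \<open>every vertex outside {a, b} is adjacent to both, so {a, b} is closed in the complement\<close>
  then have "v \<in> {a, b}"
  proof (induction rule: rtranclp_induct)
    case (step y z)
    then have z: "z \<in> V" "\<not> E y z" "y \<in> {a, b}"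
      unfolding complement_rel_def by auto
    then show ?case
      using twins[of z] vertex_adjacent_to_a_or_b[OF z(1)] by auto
  qed simp
  then show False
    using neighbours_v[of v] no_loop[of v] by blast
qed

lemma edge_iff:
  "E x y \<longleftrightarrow>
     (x = a \<and> E a y) \<or> (y = a \<and> E a x) \<or> (x = b \<and> E b y) \<or> (y = b \<and> E b x) \<or>
     (E a x \<and> \<not> E b x \<and> E b y \<and> \<not> E a y) \<or> (E b x \<and> \<not> E a x \<and> E a y \<and> \<not> E b y)"
  (is "_ \<longleftrightarrow> ?rhs")
proof
  assume e: "E x y"
  have "x = a \<or> x = b \<or> E a x \<or> E b x" "y = a \<or> y = b \<or> E a y \<or> E b y"
    using vertex_adjacent_to_a_or_b edge_in_V[OF e] by blast+
  then show ?rhs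
    using e edge_sym[OF e] neighbours_nonadjacent[of a x y] neighbours_nonadjacent[of b x y]
      no_loop[of x] not_edge_ab edge_sym[of b a]
    by auto
next
  assume ?rhs
  then show "E x y"
    using private_neighbours_adjacent[of x y] private_neighbours_adjacent[of y x]
      edge_sym[of a x] edge_sym[of b x] edge_sym[of y x]
    by blast
qed

lemma explicit_structure:
  "\<exists>A B P Q R.
     V = {A, B} \<union> P \<union> Q \<union> R \<and> A \<noteq> B \<and>
     A \<notin> P \<union> Q \<union> R \<and> B \<notin> P \<union> Q \<union> R \<and>
     P \<inter> Q = {} \<and> P \<inter> R = {} \<and> Q \<inter> R = {} \<and>
     P \<noteq> {} \<and> Q \<noteq> {} \<and> R \<noteq> {} \<and>
     (\<forall>x y. E x y \<longleftrightarrow>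
        (x = A \<and> y \<in> P \<union> R) \<or> (y = A \<and> x \<in> P \<union> R) \<or>
        (x = B \<and> y \<in> Q \<union> R) \<or> (y = B \<and> x \<in> Q \<union> R) \<or>
        (x \<in> P \<and> y \<in> Q) \<or> (x \<in> Q \<and> y \<in> P))"
proof (intro exI conjI)
  let ?P = "{y. E a y \<and> \<not> E b y}" and ?Q = "{y. E b y \<and> \<not> E a y}" and ?R = "{y. E a y \<and> E b y}"
  show "V = {a, b} \<union> ?P \<union> ?Q \<union> ?R"
    using vertex_adjacent_to_a_or_b edge_in_V(1)[OF edge_av] edge_in_V(1)[OF edge_bv]
      edge_in_V(2)[of a] edge_in_V(2)[of b]
    by blast
  show "\<forall>x y. E x y \<longleftrightarrow>
      (x = a \<and> y \<in> ?P \<union> ?R) \<or> (y = a \<and> x \<in> ?P \<union> ?R) \<or>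
      (x = b \<and> y \<in> ?Q \<union> ?R) \<or> (y = b \<and> x \<in> ?Q \<union> ?R) \<or>
      (x \<in> ?P \<and> y \<in> ?Q) \<or> (x \<in> ?Q \<and> y \<in> ?P)"
  proof (intro allI)
    fix x y
    show "E x y \<longleftrightarrow>
        (x = a \<and> y \<in> ?P \<union> ?R) \<or> (y = a \<and> x \<in> ?P \<union> ?R) \<or>
        (x = b \<and> y \<in> ?Q \<union> ?R) \<or> (y = b \<and> x \<in> ?Q \<union> ?R) \<or>
        (x \<in> ?P \<and> y \<in> ?Q) \<or> (x \<in> ?Q \<and> y \<in> ?P)"
      using edge_iff[of x y] by blast
  qed
  show "?P \<noteq> {}" using private_neighbour_exists by blast
  show "?Q \<noteq> {}" using degree_two_vertex.private_neighbour_exists[OF swap] by blast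
  show "?R \<noteq> {}" using edge_av edge_bv by blast
  show "a \<notin> ?P \<union> ?Q \<union> ?R" using no_loop[of a] not_edge_ab edge_sym[of b a] by blast
  show "b \<notin> ?P \<union> ?Q \<union> ?R" using no_loop[of b] not_edge_ab by blast
qed (use a_ne_b in blast)+

end

theorem theorem2:
  fixes V :: "'a set" and E :: "'a \<Rightarrow> 'a \<Rightarrow> bool"
  assumes "minimal_prime_graph_complement V E"
    and "\<exists>v\<in>V. degree V E v = 2"
  shows "\<exists>A B P Q R.
           V = {A, B} \<union> P \<union> Q \<union> R \<and> A \<noteq> B \<and>
           A \<notin> P \<union> Q \<union> R \<and> B \<notin> P \<union> Q \<union> R \<and>
           P \<inter> Q = {} \<and> P \<inter> R = {} \<and> Q \<inter> R = {} \<and>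
           P \<noteq> {} \<and> Q \<noteq> {} \<and> R \<noteq> {} \<and>
           (\<forall>x y. E x y \<longleftrightarrow>
              (x = A \<and> y \<in> P \<union> R) \<or> (y = A \<and> x \<in> P \<union> R) \<or>
              (x = B \<and> y \<in> Q \<union> R) \<or> (y = B \<and> x \<in> Q \<union> R) \<or>
              (x \<in> P \<and> y \<in> Q) \<or> (x \<in> Q \<and> y \<in> P))"
proof -
  interpret min_prime_complement V E
    by (rule min_prime_complement.intro) (fact assms(1))
  obtain v where v: "v \<in> V" "degree V E v = 2"
    using assms(2) by blast
  obtain a b where "a \<noteq> b" "\<And>y. E v y \<longleftrightarrow> y = a \<or> y = b"
    using degree_eq_2_imp_neighbours[OF simple v(2)] by blast
  with v(1) interpret degree_two_vertex V E v a b
    by unfold_locales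
  show ?thesis by (rule explicit_structure)
qed

end
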